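(* For every $\xi\in(0,1)$ there exists $C(\xi)$ such that if $p\ge C(\log n/n)^{1/2}$, then a.a.s. for every $x\in[1,\xi n/2]$, $G(n,p)$ does not contain a set $W$ of $x$ vertices together with a set $E$ of $x$ pairwise disjoint edges none of which has an endpoint in $W$, such that either the endpoints of each edge in $E$ have at least $\xi np^2$ common neighbours in $W$, or each vertex in $W$ is adjacent to both endpoints of at least $\xi np^2$ edges of $E$.
   Context: $G(n,p)$ is the binomial random graph on $n$ vertices; a.a.s. means with probability tending to $1$ as $n\to\infty$; $\log$ is the natural logarithm. *)

theory Defs
  imports "HOL-Probability.Probability"
begin

text \<open>Vertex set of G(n,p) is {0..<n}; a graph is its set of edges,
  each edge being a 2-element subset of the vertex set.\<close>

definition all_pairs :: "nat \<Rightarrow> nat set set" where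
  "all_pairs n = {e. e \<subseteq> {..<n} \<and> card e = 2}"

definition gnp :: "nat \<Rightarrow> real \<Rightarrow> nat set set pmf" where
  "gnp n p = map_pmf (\<lambda>f. {e \<in> all_pairs n. f e})
                     (Pi_pmf (all_pairs n) False (\<lambda>_. bernoulli_pmf p))"

definition bad_config :: "real \<Rightarrow> nat \<Rightarrow> real \<Rightarrow> nat set set \<Rightarrow> nat \<Rightarrow> bool" where
  "bad_config \<xi> n p G x \<longleftrightarrow>
     (\<exists>W E. W \<subseteq> {..<n} \<and> card W = x \<and> E \<subseteq> G \<and> card E = x \<and>
        (\<forall>e\<in>E. \<forall>f\<in>E. e \<noteq> f \<longrightarrow> e \<inter> f = {}) \<and>
        (\<forall>e\<in>E. e \<inter> W = {}) \<and>
        ((\<forall>e\<in>E. real (card {w\<in>W. \<forall>v\<in>e. {v, w} \<in> G}) \<ge> \<xi> * n * p\<^sup>2) \<or>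
         (\<forall>w\<in>W. real (card {e\<in>E. \<forall>v\<in>e. {v, w} \<in> G}) \<ge> \<xi> * n * p\<^sup>2)))"

end

theory Submission
  imports Defs
begin

text \<open>Take a union bound over the at most \<open>n^(3x)\<close> pairs \<open>(W, E)\<close>. A cherry is a pair of
  edges \<open>wv, wv'\<close> with \<open>w \<in> W\<close> and \<open>vv' \<in> E\<close>; either alternative of the forbidden configuration
  forces, by double counting, at least \<open>\<xi>np\<^sup>2x\<close> of the \<open>x\<^sup>2\<close> cherries of \<open>(W, E)\<close> to be present.
  Distinct cherries share no edge, so their number \<open>T\<close> in \<open>G(n,p)\<close> satisfies
  \<open>E 2^T = (1 + p\<^sup>2)^(x\<^sup>2) \<le> exp (x\<^sup>2p\<^sup>2)\<close>, and Markov's inequality for \<open>2^T\<close> bounds the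
  probability by \<open>exp (x\<^sup>2p\<^sup>2 - \<xi>np\<^sup>2x ln 2)\<close>. As \<open>x \<le> \<xi>n/2\<close> and \<open>\<xi>np\<^sup>2 \<ge> 30 ln n\<close>, this is at
  most \<open>n^(-5x)\<close>, which beats the \<open>n^(3x)\<close> choices of \<open>(W, E)\<close> by a factor \<open>n^(-2)\<close>, leaving
  \<open>1/n\<close> after summing over \<open>x\<close>.\<close>

lemma finite_all_pairs: "finite (all_pairs n)"
  unfolding all_pairs_def by (rule finite_subset[of _ "Pow {..<n}"]) auto

lemma set_pmf_gnp_subset: "G \<in> set_pmf (gnp n p) \<Longrightarrow> G \<subseteq> all_pairs n"
  unfolding gnp_def by auto

lemma finite_set_pmf_gnp: "finite (set_pmf (gnp n p))"
  by (rule finite_subset[of _ "Pow (all_pairs n)"]) (auto dest: set_pmf_gnp_subset intro: finite_all_pairs)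

lemma prob_gnp_superset:
  assumes F: "F \<subseteq> all_pairs n" and p: "0 \<le> p" "p \<le> 1"
  shows "measure_pmf.prob (gnp n p) {G. F \<subseteq> G} = p ^ card F"
proof -
  have pre: "(\<lambda>f. {e \<in> all_pairs n. f e}) -` {G. F \<subseteq> G} =
        Pi (all_pairs n) (\<lambda>e. if e \<in> F then {True} else UNIV)"
    using F by (auto simp: Pi_def split: if_splits)
  have "measure_pmf.prob (gnp n p) {G. F \<subseteq> G} =
     measure_pmf.prob (Pi_pmf (all_pairs n) False (\<lambda>_. bernoulli_pmf p))
        (Pi (all_pairs n) (\<lambda>e. if e \<in> F then {True} else UNIV))"
    unfolding gnp_def measure_map_pmf pre by simp
  also have "\<dots> = (\<Prod>e\<in>all_pairs n. measure_pmf.prob (bernoulli_pmf p) (if e \<in> F then {True} else UNIV))"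
    by (rule measure_Pi_pmf_Pi[OF finite_all_pairs])
  also have "\<dots> = (\<Prod>e\<in>all_pairs n. if e \<in> F then p else 1)"
    by (rule prod.cong) (use p in \<open>auto simp: measure_pmf_single\<close>)
  also have "\<dots> = p ^ card F"
    using F finite_all_pairs by (subst prod.If_cases) (auto simp: Int_absorb1)
  finally show ?thesis .
qed

lemma sum_Pow_indicator_Union_subset:
  fixes F :: "'i \<Rightarrow> 'a set"
  assumes "finite I"
  shows "(\<Sum>S\<in>Pow I. indicator {G. \<Union>(F ` S) \<subseteq> G} G :: real) = 2 ^ card {i\<in>I. F i \<subseteq> G}"
proof -
  define K where "K = {i\<in>I. F i \<subseteq> G}"
  have "(\<Sum>S\<in>Pow I. indicator {G. \<Union>(F ` S) \<subseteq> G} G :: real) = (\<Sum>S\<in>Pow I. if S \<in> Pow K then 1 else 0)"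
    by (rule sum.cong) (auto simp: K_def indicator_def)
  also have "\<dots> = real (card (Pow K))"
  proof -
    have "Pow I \<inter> {S. S \<in> Pow K} = Pow K" by (auto simp: K_def)
    then show ?thesis using assms by (subst sum.If_cases) auto
  qed
  also have "\<dots> = 2 ^ card K"
    using assms by (simp add: card_Pow K_def)
  finally show ?thesis unfolding K_def .
qed

text \<open>\<open>2^T\<close> counts the sets \<open>S \<subseteq> I\<close> with \<open>\<Union>(F ` S) \<subseteq> G\<close>, and by disjointness each such union
  is present with probability \<open>p^(k |S|)\<close>.\<close>

lemma expectation_gnp_two_pow_count:
  assumes I: "finite I" and F: "\<And>i. i \<in> I \<Longrightarrow> F i \<subseteq> all_pairs n"
    and k: "\<And>i. i \<in> I \<Longrightarrow> card (F i) = k"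
    and disj: "\<And>i j. i \<in> I \<Longrightarrow> j \<in> I \<Longrightarrow> i \<noteq> j \<Longrightarrow> F i \<inter> F j = {}"
    and p: "0 \<le> p" "p \<le> 1"
  shows "measure_pmf.expectation (gnp n p) (\<lambda>G. 2 ^ card {i\<in>I. F i \<subseteq> G} :: real) = (1 + p ^ k) ^ card I"
proof -
  let ?M = "gnp n p"
  have int: "integrable ?M f" for f :: "nat set set \<Rightarrow> real"
    by (rule integrable_measure_pmf_finite[OF finite_set_pmf_gnp])
  have prob_S: "measure_pmf.prob ?M {G. \<Union>(F ` S) \<subseteq> G} = (p ^ k) ^ card S" if S: "S \<subseteq> I" for S
  proof -
    have "finite S" using S I by (rule finite_subset)
    then have "card (\<Union>(F ` S)) = (\<Sum>i\<in>S. card (F i))"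
      by (intro card_UN_disjoint) (use S F disj in \<open>blast intro: finite_subset[OF _ finite_all_pairs]\<close>)+
    also have "\<dots> = k * card S" using S k by (simp add: subset_iff)
    finally have "card (\<Union>(F ` S)) = k * card S" .
    moreover have "\<Union>(F ` S) \<subseteq> all_pairs n" using S F by blast
    ultimately show ?thesis by (simp add: prob_gnp_superset p power_mult)
  qed
  have "measure_pmf.expectation ?M (\<lambda>G. 2 ^ card {i\<in>I. F i \<subseteq> G} :: real)
      = (\<Sum>S\<in>Pow I. measure_pmf.expectation ?M (indicator {G. \<Union>(F ` S) \<subseteq> G}))"
    by (simp add: sum_Pow_indicator_Union_subset[OF I, symmetric] integral_sum int)
  also have "\<dots> = (\<Sum>S\<in>Pow I. (p ^ k) ^ card S)"
    by (rule sum.cong) (simp_all add: prob_S)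
  also have "\<dots> = (1 + p ^ k) ^ card I"
    using prod_add[OF I, of "\<lambda>_. p ^ k" "\<lambda>_. 1"] by (simp add: add.commute)
  finally show ?thesis .
qed

lemma prob_gnp_count_ge:
  assumes I: "finite I" and F: "\<And>i. i \<in> I \<Longrightarrow> F i \<subseteq> all_pairs n"
    and k: "\<And>i. i \<in> I \<Longrightarrow> card (F i) = k"
    and disj: "\<And>i j. i \<in> I \<Longrightarrow> j \<in> I \<Longrightarrow> i \<noteq> j \<Longrightarrow> F i \<inter> F j = {}"
    and p: "0 \<le> p" "p \<le> 1"
  shows "measure_pmf.prob (gnp n p) {G. t \<le> real (card {i\<in>I. F i \<subseteq> G})} \<le> (1 + p ^ k) ^ card I / 2 powr t"
proof -
  have "{G. t \<le> real (card {i\<in>I. F i \<subseteq> G})} = {G \<in> space (gnp n p). 2 powr t \<le> (2::real) ^ card {i\<in>I. F i \<subseteq> G}}"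
    by (auto simp flip: powr_realpow)
  also have "measure_pmf.prob (gnp n p) \<dots> \<le> measure_pmf.expectation (gnp n p) (\<lambda>G. (2::real) ^ card {i\<in>I. F i \<subseteq> G}) / 2 powr t"
    by (rule integral_Markov_inequality_measure)
       (auto intro: integrable_measure_pmf_finite[OF finite_set_pmf_gnp])
  finally show ?thesis by (simp add: expectation_gnp_two_pow_count[OF assms])
qed

definition configs :: "nat \<Rightarrow> nat \<Rightarrow> (nat set \<times> nat set set) set" where
  "configs n x = {(W, E). W \<subseteq> {..<n} \<and> card W = x \<and> E \<subseteq> all_pairs n \<and> card E = x \<and>
     (\<forall>e\<in>E. \<forall>f\<in>E. e \<noteq> f \<longrightarrow> e \<inter> f = {}) \<and> (\<forall>e\<in>E. e \<inter> W = {})}"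

definition cherry :: "nat \<times> nat set \<Rightarrow> nat set set" where
  "cherry = (\<lambda>(w, e). (\<lambda>v. {v, w}) ` e)"

lemma configs_finite_parts:
  assumes "(W, E) \<in> configs n x"
  shows "finite W" and "finite E"
  using assms finite_all_pairs by (auto simp: configs_def intro: finite_subset)

lemma finite_configs: "finite (configs n x)"
proof -
  have "configs n x \<subseteq> Pow {..<n} \<times> Pow (all_pairs n)" by (auto simp: configs_def)
  then show ?thesis by (rule finite_subset) (simp add: finite_all_pairs)
qed

lemma cherry_subset_all_pairs:
  assumes "(W, E) \<in> configs n x" and "i \<in> W \<times> E"
  shows "cherry i \<subseteq> all_pairs n"
proof -
  obtain w e where i: "i = (w, e)" and w: "w \<in> W" and e: "e \<in> E" using assms(2) by auto
  have "e \<subseteq> {..<n}" "w < n" "w \<notin> e" using assms w e by (auto simp: configs_def all_pairs_def)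
  then show ?thesis by (auto simp: i cherry_def all_pairs_def card_2_iff)
qed

lemma card_cherry:
  assumes "(W, E) \<in> configs n x" and "i \<in> W \<times> E"
  shows "card (cherry i) = 2"
proof -
  obtain w e where i: "i = (w, e)" and w: "w \<in> W" and e: "e \<in> E" using assms(2) by auto
  obtain a b where e_ab: "e = {a, b}" "a \<noteq> b" using assms e by (auto simp: configs_def all_pairs_def card_2_iff)
  have "w \<notin> e" using assms w e by (auto simp: configs_def)
  then have "{a, w} \<noteq> {b, w}" using e_ab by (auto simp: doubleton_eq_iff)
  then show ?thesis by (simp add: i e_ab cherry_def)
qed

lemma cherries_disjoint:
  assumes WE: "(W, E) \<in> configs n x" and "i \<in> W \<times> E" "j \<in> W \<times> E" "i \<noteq> j"
  shows "cherry i \<inter> cherry j = {}"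
proof (rule ccontr)
  obtain w e w' e' where ij: "i = (w, e)" "j = (w', e')" and
    w: "w \<in> W" "w' \<in> W" and e: "e \<in> E" "e' \<in> E" using assms(2,3) by auto
  assume "cherry i \<inter> cherry j \<noteq> {}"
  then obtain v v' where v: "v \<in> e" "v' \<in> e'" and eq: "{v, w} = {v', w'}"
    by (auto simp: ij cherry_def)
  have "v \<notin> W" "v' \<notin> W" using WE v e by (auto simp: configs_def)
  then have "v = v'" "w = w'" using eq w by (auto simp: doubleton_eq_iff)
  then have "e = e'" using WE v e unfolding configs_def by blast
  then show False using ij \<open>w = w'\<close> assms(4) by simp
qed

lemma bad_config_imp_many_cherries:
  assumes bad: "bad_config \<xi> n p G x" and G: "G \<subseteq> all_pairs n"
  shows "\<exists>(W, E)\<in>configs n x. \<xi> * n * p\<^sup>2 * x \<le> real (card {i\<in>W \<times> E. cherry i \<subseteq> G})"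
proof -
  obtain W E where W: "W \<subseteq> {..<n}" "card W = x" and E: "E \<subseteq> G" "card E = x"
    and dj: "\<forall>e\<in>E. \<forall>f\<in>E. e \<noteq> f \<longrightarrow> e \<inter> f = {}" and dW: "\<forall>e\<in>E. e \<inter> W = {}"
    and cond: "(\<forall>e\<in>E. \<xi> * n * p\<^sup>2 \<le> real (card {w\<in>W. \<forall>v\<in>e. {v, w} \<in> G})) \<or>
               (\<forall>w\<in>W. \<xi> * n * p\<^sup>2 \<le> real (card {e\<in>E. \<forall>v\<in>e. {v, w} \<in> G}))"
    using bad unfolding bad_config_def by (elim exE conjE) (rule that, assumption+)
  have WE: "(W, E) \<in> configs n x" using W E dj dW G by (auto simp: configs_def)
  note fin = configs_finite_parts[OF WE]
  define T where "T = {i\<in>W \<times> E. cherry i \<subseteq> G}"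
  have "\<xi> * n * p\<^sup>2 * x \<le> real (card T)"
    using cond
  proof
    assume h: "\<forall>e\<in>E. \<xi> * n * p\<^sup>2 \<le> real (card {w\<in>W. \<forall>v\<in>e. {v, w} \<in> G})"
    have "T = prod.swap ` Sigma E (\<lambda>e. {w\<in>W. \<forall>v\<in>e. {v, w} \<in> G})"
      by (auto simp: T_def cherry_def image_iff) blast
    then have "real (card T) = (\<Sum>e\<in>E. real (card {w\<in>W. \<forall>v\<in>e. {v, w} \<in> G}))"
      by (simp add: card_image fin)
    also have "\<dots> \<ge> (\<Sum>e\<in>E. \<xi> * n * p\<^sup>2)" by (rule sum_mono) (use h in auto)
    finally show ?thesis using E by (simp add: mult.commute)
  next
    assume h: "\<forall>w\<in>W. \<xi> * n * p\<^sup>2 \<le> real (card {e\<in>E. \<forall>v\<in>e. {v, w} \<in> G})"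
    have "T = Sigma W (\<lambda>w. {e\<in>E. \<forall>v\<in>e. {v, w} \<in> G})"
      by (auto simp: T_def cherry_def)
    then have "real (card T) = (\<Sum>w\<in>W. real (card {e\<in>E. \<forall>v\<in>e. {v, w} \<in> G}))"
      by (simp add: card_SigmaI fin)
    also have "\<dots> \<ge> (\<Sum>w\<in>W. \<xi> * n * p\<^sup>2)" by (rule sum_mono) (use h in auto)
    finally show ?thesis using W by (simp add: mult.commute)
  qed
  then show ?thesis using WE unfolding T_def by blast
qed

lemma card_all_pairs: "card (all_pairs n) = n choose 2"
  unfolding all_pairs_def using n_subsets[of "{..<n}" 2] by simp

lemma binomial_le_power: "m choose k \<le> m ^ k"
  by (rule order_trans[OF _ binomial_fact_pow]) simp

lemma card_configs_le: "card (configs n x) \<le> n ^ (3 * x)"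
proof -
  define Ws where "Ws = {W. W \<subseteq> {..<n} \<and> card W = x}"
  define Es where "Es = {E. E \<subseteq> all_pairs n \<and> card E = x}"
  have "finite Ws" "finite Es" unfolding Ws_def Es_def using finite_all_pairs by simp_all
  moreover have "configs n x \<subseteq> Ws \<times> Es" by (auto simp: configs_def Ws_def Es_def)
  ultimately have "card (configs n x) \<le> card Ws * card Es"
    by (metis card_cartesian_product card_mono finite_SigmaI)
  also have "card Ws * card Es = (n choose x) * ((n choose 2) choose x)"
    unfolding Ws_def Es_def by (simp add: n_subsets finite_all_pairs card_all_pairs)
  also have "\<dots> \<le> n ^ x * (n ^ 2) ^ x"
    by (intro mult_le_mono binomial_le_power order_trans[OF binomial_le_power] power_mono) simp_all
  also have "\<dots> = n ^ (3 * x)" by (simp flip: power_mult power_add)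
  finally show ?thesis .
qed

lemma prob_bad_config_le:
  assumes p: "0 \<le> p" "p \<le> 1"
  shows "measure_pmf.prob (gnp n p) {G. bad_config \<xi> n p G x}
          \<le> real n ^ (3 * x) * ((1 + p\<^sup>2) ^ (x * x) / 2 powr (\<xi> * n * p\<^sup>2 * x))"
proof -
  let ?M = "gnp n p"
  define t where "t = \<xi> * n * p\<^sup>2 * x"
  define B where "B = (\<lambda>(W, E). {G. t \<le> real (card {i\<in>W \<times> E. cherry i \<subseteq> G})})"
  have "{G. bad_config \<xi> n p G x} \<inter> set_pmf ?M \<subseteq> (\<Union>c\<in>configs n x. B c)"
  proof
    fix G assume "G \<in> {G. bad_config \<xi> n p G x} \<inter> set_pmf ?M"
    then obtain W E where "(W, E) \<in> configs n x" "t \<le> real (card {i\<in>W \<times> E. cherry i \<subseteq> G})"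
      using bad_config_imp_many_cherries set_pmf_gnp_subset unfolding t_def by blast
    then show "G \<in> (\<Union>c\<in>configs n x. B c)" by (auto simp: B_def)
  qed
  then have "measure_pmf.prob ?M {G. bad_config \<xi> n p G x} \<le> measure_pmf.prob ?M (\<Union>c\<in>configs n x. B c)"
    by (subst measure_Int_set_pmf[symmetric]) (rule measure_pmf.finite_measure_mono, simp_all)
  also have "\<dots> \<le> (\<Sum>c\<in>configs n x. measure_pmf.prob ?M (B c))"
    by (rule measure_pmf.finite_measure_subadditive_finite) (simp_all add: finite_configs)
  also have "\<dots> \<le> real (card (configs n x)) * ((1 + p\<^sup>2) ^ (x * x) / 2 powr t)"
  proof (rule sum_bounded_above)
    fix c assume c: "c \<in> configs n x"
    obtain W E where WE: "c = (W, E)" "(W, E) \<in> configs n x" using c by (cases c) simp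
    have "card (W \<times> E) = x * x" using WE(2) by (simp add: configs_def card_cartesian_product)
    then show "measure_pmf.prob ?M (B c) \<le> (1 + p\<^sup>2) ^ (x * x) / 2 powr t"
      unfolding B_def WE(1) prod.case
      using prob_gnp_count_ge[where I = "W \<times> E" and F = cherry, OF _ cherry_subset_all_pairs[OF WE(2)] card_cherry[OF WE(2)]
          cherries_disjoint[OF WE(2)] p] configs_finite_parts[OF WE(2)] by simp
  qed
  also have "\<dots> \<le> real n ^ (3 * x) * ((1 + p\<^sup>2) ^ (x * x) / 2 powr t)"
    by (intro mult_right_mono) (simp_all flip: of_nat_power add: card_configs_le)
  finally show ?thesis unfolding t_def .
qed

lemma union_bound_le_inverse_square:
  fixes n x :: nat and p \<xi> :: real
  assumes n: "2 \<le> n" and x: "1 \<le> x" "real x \<le> \<xi> * n / 2" and np: "30 * ln n \<le> \<xi> * n * p\<^sup>2"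
  shows "real n ^ (3 * x) * ((1 + p\<^sup>2) ^ (x * x) / 2 powr (\<xi> * n * p\<^sup>2 * x)) \<le> 1 / real n ^ 2"
proof -
  define t where "t = \<xi> * n * p\<^sup>2 * x"
  define L where "L = ln (real n)"
  have "0 \<le> L" using n by (simp add: L_def)
  then have t_ge: "30 * x * L \<le> t"
    using mult_right_mono[OF np, of x] by (simp add: t_def L_def algebra_simps)
  have "(1 + p\<^sup>2) ^ (x * x) \<le> exp (p\<^sup>2) ^ (x * x)"
    by (intro power_mono) (simp_all add: add.commute exp_ge_add_one_self)
  also have "\<dots> = exp (x * x * p\<^sup>2)" by (simp flip: exp_of_nat_mult)
  also have "\<dots> \<le> exp (t / 2)"
    using mult_right_mono[OF mult_right_mono[OF x(2), of x], of "p\<^sup>2"] by (simp add: t_def algebra_simps)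
  finally have "(1 + p\<^sup>2) ^ (x * x) / 2 powr t \<le> exp (t / 2) / exp (t * ln 2)"
    by (simp add: powr_def divide_right_mono)
  also have "\<dots> = exp (t / 2 - t * ln 2)" by (simp add: exp_diff)
  also have "\<dots> \<le> exp (- (5 * x * L))"
  proof -
    have "0 \<le> t" using t_ge \<open>0 \<le> L\<close> by (smt (verit) mult_nonneg_nonneg of_nat_0_le_iff)
    then show ?thesis using mult_left_mono[OF ln2_ge_two_thirds, of t] t_ge by simp
  qed
  also have "\<dots> = 1 / real n ^ (5 * x)"
  proof -
    have "exp (5 * x * L) = real n ^ (5 * x)"
      using n exp_of_nat_mult[of "5 * x" L] by (simp add: L_def)
    then show ?thesis by (simp add: exp_minus inverse_eq_divide)
  qed
  finally have "real n ^ (3 * x) * ((1 + p\<^sup>2) ^ (x * x) / 2 powr t) \<le> real n ^ (3 * x) / real n ^ (5 * x)"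
    by (simp add: mult_left_mono divide_inverse)
  also have "\<dots> = 1 / real n ^ (2 * x)"
    using n by (simp add: power_add[symmetric] field_simps)
  also have "\<dots> \<le> 1 / real n ^ 2"
    using n x by (intro divide_left_mono power_increasing) simp_all
  finally show ?thesis unfolding t_def .
qed

lemma prob_no_bad_config_ge:
  assumes n: "2 \<le> n" and p: "0 \<le> p" "p \<le> 1" and \<xi>: "\<xi> \<le> 1" and np: "30 * ln n \<le> \<xi> * n * p\<^sup>2"
  shows "1 - 1 / n \<le> measure_pmf.prob (gnp n p)
           {G. \<forall>x. 1 \<le> x \<and> real x \<le> \<xi> * n / 2 \<longrightarrow> \<not> bad_config \<xi> n p G x}"
    (is "_ \<le> measure_pmf.prob ?M ?good")
proof -
  define X where "X = {x::nat. 1 \<le> x \<and> real x \<le> \<xi> * n / 2}"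
  have "X \<subseteq> {1..n}"
    using \<xi> mult_right_mono[OF \<xi>, of n] by (auto simp: X_def)
  then have finX: "finite X" and cardX: "card X \<le> n"
    using finite_subset card_mono[of "{1..n}" X] by auto
  have "measure_pmf.prob ?M (UNIV - ?good) = measure_pmf.prob ?M (\<Union>x\<in>X. {G. bad_config \<xi> n p G x})"
    by (rule arg_cong[where f = "measure_pmf.prob ?M"]) (auto simp: X_def)
  also have "\<dots> \<le> (\<Sum>x\<in>X. measure_pmf.prob ?M {G. bad_config \<xi> n p G x})"
    by (rule measure_pmf.finite_measure_subadditive_finite) (simp_all add: finX)
  also have "\<dots> \<le> real (card X) * (1 / real n ^ 2)"
  proof (rule sum_bounded_above)
    fix x assume "x \<in> X"
    then show "measure_pmf.prob ?M {G. bad_config \<xi> n p G x} \<le> 1 / real n ^ 2"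
      by (intro order_trans[OF prob_bad_config_le[OF p] union_bound_le_inverse_square[OF n _ _ np]])
        (simp_all add: X_def)
  qed
  also have "\<dots> \<le> real n * (1 / real n ^ 2)"
    using cardX by (intro mult_right_mono) simp_all
  also have "\<dots> = 1 / n" by (simp add: power2_eq_square)
  finally show ?thesis
    using measure_pmf.prob_compl[of "UNIV - ?good" ?M] by (simp add: Diff_Diff_Int)
qed

theorem proposition4p3:
  fixes \<xi> :: real
  assumes "0 < \<xi>" and "\<xi> < 1"
  shows "\<exists>C::real. \<forall>p :: nat \<Rightarrow> real.
           (\<forall>n. 0 \<le> p n \<and> p n \<le> 1) \<longrightarrow>
           (\<forall>\<^sub>F n in sequentially. p n \<ge> C * sqrt (ln (real n) / real n)) \<longrightarrow>
           ((\<lambda>n. measure_pmf.prob (gnp n (p n))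
                 {G. \<forall>x::nat. 1 \<le> x \<and> real x \<le> \<xi> * real n / 2 \<longrightarrow>
                        \<not> bad_config \<xi> n (p n) G x}) \<longlonglongrightarrow> 1)"
proof (intro exI allI impI)
  fix p :: "nat \<Rightarrow> real"
  let ?C = "sqrt (30 / \<xi>)"
  assume p: "\<forall>n. 0 \<le> p n \<and> p n \<le> 1" and ev: "\<forall>\<^sub>F n in sequentially. p n \<ge> ?C * sqrt (ln n / n)"
  have np: "30 * ln n \<le> \<xi> * n * (p n)\<^sup>2" if n: "2 \<le> n" and pn: "?C * sqrt (ln n / n) \<le> p n" for n
  proof -
    have "(?C * sqrt (ln n / n))\<^sup>2 \<le> (p n)\<^sup>2"
      using n pn assms by (intro power_mono) simp_all
    then have "30 / \<xi> * (ln n / n) \<le> (p n)\<^sup>2"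
      using n assms by (simp add: power_mult_distrib)
    then show ?thesis using n assms by (simp add: field_simps)
  qed
  have "\<forall>\<^sub>F n in sequentially. 1 - 1 / n \<le> measure_pmf.prob (gnp n (p n))
          {G. \<forall>x::nat. 1 \<le> x \<and> real x \<le> \<xi> * real n / 2 \<longrightarrow> \<not> bad_config \<xi> n (p n) G x}"
    using ev eventually_ge_at_top[of 2]
    by eventually_elim (intro prob_no_bad_config_ge np; use p assms in simp)
  moreover have "\<forall>\<^sub>F n in sequentially. measure_pmf.prob (gnp n (p n))
          {G. \<forall>x::nat. 1 \<le> x \<and> real x \<le> \<xi> * real n / 2 \<longrightarrow> \<not> bad_config \<xi> n (p n) G x} \<le> 1"
    by (simp add: measure_pmf.prob_le_1)
  moreover have "(\<lambda>n. 1 - 1 / real n) \<longlonglongrightarrow> 1"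
    using tendsto_diff[OF tendsto_const lim_1_over_n, of 1] by simp
  ultimately show "(\<lambda>n. measure_pmf.prob (gnp n (p n))
         {G. \<forall>x::nat. 1 \<le> x \<and> real x \<le> \<xi> * real n / 2 \<longrightarrow> \<not> bad_config \<xi> n (p n) G x}) \<longlonglongrightarrow> 1"
    by (rule tendsto_sandwich[OF _ _ _ tendsto_const])
qed

end
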